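(* Let $(\mathcal F,d)$ be a metric space, $\gamma\in(0,\infty]$, and $\Sigma=(\Sigma_M)_{M\in\mathbb N}$ a sequence of non-empty subsets of $\mathcal F$ which is $\gamma$-encodable. For $\alpha,\beta>0$ let $\mathcal A^\alpha(\mathcal F,\Sigma,\beta)=\{f\in\mathcal F:\sup_{M\ge1}M^\alpha d(f,\Sigma_M)\le\beta\}$, where $d(f,\Sigma_M)=\inf_{g\in\Sigma_M}d(f,g)$, and assume it is non-empty. Then $\gamma^*_e(\mathcal A^\alpha(\mathcal F,\Sigma,\beta))\ge\min(\alpha,\gamma)$.
   Context: A finite $X\subset\mathcal C$ is an $\varepsilon$-covering of $\mathcal C$ if every point of $\mathcal C$ is within distance $\varepsilon$ of some point of $X$; $N(\mathcal C,d,\varepsilon)$ is the minimal size of such a covering ($+\infty$ if none), $H=\log_2N$, and $\gamma^*_e(\mathcal C)=\sup\{\gamma>0:H(\mathcal C,d,\varepsilon)=O(\varepsilon^{-1/\gamma})\text{ as }\varepsilon\to0\}$ ($0$ if empty). For $\gamma,h>0$, a $(\gamma,h)$-encoding of $\Sigma$ is a sequence $(\Sigma(\gamma,h)_M)_M$ such that for some $c_1,c_2>0$ and all $M$, $\Sigma(\gamma,h)_M$ is a $c_1M^{-\gamma}$-covering of $\Sigma_M$ with $\log_2|\Sigma(\gamma,h)_M|\le c_2M^{1+h}$. $\Sigma$ is $\gamma$-encodable if it admits a $(\gamma,h)$-encoding for every $h>0$, and $\infty$-encodable if $\gamma$-encodable for all $\gamma>0$. *)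

theory Defs
  imports "HOL-Analysis.Analysis" "HOL-Library.Extended_Nat" "HOL-Library.Extended_Real"
begin

definition is_covering :: "'a::metric_space set \<Rightarrow> 'a set \<Rightarrow> real \<Rightarrow> bool" where
  "is_covering X C eps \<longleftrightarrow> finite X \<and> X \<subseteq> C \<and> (\<forall>y\<in>C. \<exists>x\<in>X. dist y x \<le> eps)"

text \<open>Covering number N(C,d,eps); infinity if no finite covering exists (Inf {} = infinity).\<close>
definition covering_number :: "'a::metric_space set \<Rightarrow> real \<Rightarrow> enat" where
  "covering_number C eps = Inf {enat (card X) | X. is_covering X C eps}"

definition entropy_bigO :: "'a::metric_space set \<Rightarrow> real \<Rightarrow> bool" where
  "entropy_bigO C g \<longleftrightarrow> (\<exists>c. \<forall>\<^sub>F eps in at_right 0.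
      covering_number C eps \<noteq> \<infinity> \<and>
      \<bar>log 2 (real (the_enat (covering_number C eps)))\<bar> \<le> c * \<bar>eps powr (- 1 / g)\<bar>)"

definition opt_entropy_exp :: "'a::metric_space set \<Rightarrow> ereal" where
  "opt_entropy_exp C =
     (if {g::real. g > 0 \<and> entropy_bigO C g} = {} then 0
      else Sup (ereal ` {g::real. g > 0 \<and> entropy_bigO C g}))"

definition has_encoding :: "(nat \<Rightarrow> 'a::metric_space set) \<Rightarrow> real \<Rightarrow> real \<Rightarrow> bool" where
  "has_encoding \<Sigma> g h \<longleftrightarrow> (\<exists>E :: nat \<Rightarrow> 'a set. \<exists>c1 c2. c1 > 0 \<and> c2 > 0 \<and>
      (\<forall>M\<ge>1. is_covering (E M) (\<Sigma> M) (c1 * real M powr (- g)) \<and>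
               log 2 (real (card (E M))) \<le> c2 * real M powr (1 + h)))"

definition gamma_encodable :: "(nat \<Rightarrow> 'a::metric_space set) \<Rightarrow> real \<Rightarrow> bool" where
  "gamma_encodable \<Sigma> g \<longleftrightarrow> (\<forall>h>0. has_encoding \<Sigma> g h)"

definition encodable :: "(nat \<Rightarrow> 'a::metric_space set) \<Rightarrow> ereal \<Rightarrow> bool" where
  "encodable \<Sigma> g \<longleftrightarrow> (if g = \<infinity> then (\<forall>g'>0. gamma_encodable \<Sigma> g')
                        else gamma_encodable \<Sigma> (real_of_ereal g))"

definition approx_class :: "real \<Rightarrow> (nat \<Rightarrow> 'a::metric_space set) \<Rightarrow> real \<Rightarrow> 'a set" where
  "approx_class \<alpha> \<Sigma> \<beta> = {f. \<forall>M\<ge>1. real M powr \<alpha> * infdist f (\<Sigma> M) \<le> \<beta>}"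

end

theory Submission
  imports Defs
begin

text \<open>Fix 0 < g < a \<le> min \<alpha> \<gamma>. Since every element of the approximation class lies
  within \<beta> M^-\<alpha> of \<Sigma> M, an encoding of \<Sigma> M at precision M^-\<gamma> is a net of the class
  (with centres outside it) at radius O(M^-a); moving the centres into the class at most
  doubles the radius. Taking h = a/g - 1, the net has at most 2^(c M^(a/g)) points, so
  choosing M of order \<epsilon>^(-1/a) gives H(\<epsilon>) = O(\<epsilon>^(-1/g)). Letting g tend to min \<alpha> \<gamma>
  bounds the optimal entropy exponent from below.\<close>

lemma finite_infdist_attained:
  fixes E :: "'a::metric_space set"
  assumes "finite E" "E \<noteq> {}"
  obtains e where "e \<in> E" "infdist x E = dist x e"
proof -
  have "infdist x E = Min (dist x ` E)"
    using assms by (simp add: infdist_notempty cInf_eq_Min)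
  moreover have "Min (dist x ` E) \<in> dist x ` E"
    using assms by (intro Min_in) auto
  ultimately show ?thesis using that by auto
qed

lemma infdist_le_infdist_add:
  assumes "S \<noteq> {}" and net: "\<forall>y\<in>S. \<exists>z\<in>E. dist y z \<le> \<delta>"
  shows "infdist x E \<le> infdist x S + \<delta>"
proof -
  have "infdist x E - \<delta> \<le> dist x y" if "y \<in> S" for y
  proof -
    obtain z where "z \<in> E" "dist y z \<le> \<delta>" using net \<open>y \<in> S\<close> by auto
    then have "infdist y E \<le> \<delta>" by (rule infdist_le2)
    then show ?thesis using infdist_triangle[of x E y] by linarith
  qed
  then have "infdist x E - \<delta> \<le> infdist x S"
    unfolding infdist_notempty[OF \<open>S \<noteq> {}\<close>] using \<open>S \<noteq> {}\<close> by (intro cINF_greatest)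
  then show ?thesis by simp
qed

lemma covering_from_external_net:
  fixes C E :: "'a::metric_space set"
  assumes "finite E" and net: "\<forall>x\<in>C. \<exists>e\<in>E. dist x e \<le> r"
  obtains X where "is_covering X C (2 * r)" "card X \<le> card E"
proof -
  define D where "D = {e\<in>E. \<exists>x\<in>C. dist x e \<le> r}"
  define pick where "pick = (\<lambda>e. SOME x. x \<in> C \<and> dist x e \<le> r)"
  have pick: "pick e \<in> C \<and> dist (pick e) e \<le> r" if "e \<in> D" for e
    using that unfolding D_def pick_def by (metis (mono_tags, lifting) mem_Collect_eq someI_ex)
  have "finite D" using \<open>finite E\<close> unfolding D_def by auto
  have "is_covering (pick ` D) C (2 * r)"
    unfolding is_covering_def
  proof (intro conjI ballI)
    show "finite (pick ` D)" using \<open>finite D\<close> by simp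
    show "pick ` D \<subseteq> C" using pick by auto
    fix x assume "x \<in> C"
    then obtain e where e: "e \<in> E" "dist x e \<le> r" using net by auto
    then have "e \<in> D" using \<open>x \<in> C\<close> unfolding D_def by auto
    have "dist x (pick e) \<le> dist x e + dist (pick e) e" by (rule dist_triangle2)
    also have "\<dots> \<le> 2 * r" using e pick[OF \<open>e \<in> D\<close>] by linarith
    finally show "\<exists>y\<in>pick ` D. dist x y \<le> 2 * r" using \<open>e \<in> D\<close> by auto
  qed
  moreover have "card (pick ` D) \<le> card E"
    using card_image_le[OF \<open>finite D\<close>, of pick] card_mono[OF \<open>finite E\<close>, of D]
    unfolding D_def by auto
  ultimately show ?thesis by (rule that)
qed

lemma covering_number_le_card:
  "is_covering X C eps \<Longrightarrow> covering_number C eps \<le> enat (card X)"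
  unfolding covering_number_def by (intro Inf_lower) auto

lemma one_le_covering_number:
  assumes "C \<noteq> {}"
  shows "1 \<le> covering_number C eps"
  unfolding covering_number_def
proof (rule Inf_greatest)
  fix n assume "n \<in> {enat (card X) |X. is_covering X C eps}"
  then obtain X where n: "n = enat (card X)" and X: "is_covering X C eps" by auto
  have "X \<noteq> {}" using X assms unfolding is_covering_def by auto
  then have "card X \<ge> 1" using X unfolding is_covering_def
    by (simp add: Suc_leI card_gt_0_iff)
  then show "1 \<le> n" using n by (simp add: one_enat_def)
qed

lemma log_covering_number_le_external_net:
  fixes C E :: "'a::metric_space set"
  assumes "C \<noteq> {}" "finite E" "\<forall>x\<in>C. \<exists>e\<in>E. dist x e \<le> r"
  shows "covering_number C (2 * r) \<noteq> \<infinity> \<and>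
    \<bar>log 2 (real (the_enat (covering_number C (2 * r))))\<bar> \<le> log 2 (real (card E))"
proof -
  obtain X where X: "is_covering X C (2 * r)" "card X \<le> card E"
    using covering_from_external_net[OF assms(2,3)] .
  obtain n where n: "covering_number C (2 * r) = enat n" "n \<le> card X"
    using covering_number_le_card[OF X(1)] by (cases "covering_number C (2 * r)") auto
  have "1 \<le> n" using one_le_covering_number[OF assms(1), of "2 * r"] n(1) by (simp add: one_enat_def)
  then show ?thesis using n X(2) by simp
qed

lemma exists_scale_for_radius:
  fixes K a b eps :: real
  assumes "K > 0" "a > 0" "b > 0" "0 < eps" "eps \<le> 2 * K"
  obtains M :: nat where "M \<ge> 1" "K * real M powr (- a) \<le> eps / 2"
    "real M powr b \<le> 2 powr b * (2 * K) powr (b / a) * eps powr (- b / a)"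
proof -
  define t where "t = (2 * K / eps) powr (1 / a)"
  have "t \<ge> 1" unfolding t_def using assms by (simp add: ge_one_powr_ge_zero)
  define M where "M = nat \<lceil>t\<rceil>"
  have "t \<le> real M" "real M \<le> 2 * t" "M \<ge> 1" unfolding M_def using \<open>t \<ge> 1\<close> by linarith+
  have "t powr (- a) = eps / (2 * K)"
    unfolding t_def using assms by (simp add: powr_powr powr_minus_divide)
  then have "real M powr (- a) \<le> eps / (2 * K)"
    using powr_mono2'[of "- a" t "real M"] \<open>t \<le> real M\<close> \<open>t \<ge> 1\<close> assms by simp
  then have "K * real M powr (- a) \<le> eps / 2"
    using assms by (simp add: field_simps)
  moreover have "real M powr b \<le> (2 * t) powr b"
    using \<open>real M \<le> 2 * t\<close> assms by (intro powr_mono2) auto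
  moreover have "(2 * t) powr b = 2 powr b * (2 * K) powr (b / a) * eps powr (- b / a)"
    unfolding t_def using assms
    by (simp add: powr_mult powr_powr powr_divide powr_minus_divide divide_simps)
  ultimately show ?thesis using that \<open>M \<ge> 1\<close> by simp
qed

lemma entropy_bigO_of_nets:
  fixes C :: "'a::metric_space set" and a b K c :: real
  assumes "C \<noteq> {}" "a > 0" "b > 0" "K > 0" "c \<ge> 0"
    and nets: "\<And>M. M \<ge> 1 \<Longrightarrow> \<exists>E. finite E \<and> (\<forall>x\<in>C. \<exists>e\<in>E. dist x e \<le> K * real M powr (- a))
                              \<and> log 2 (real (card E)) \<le> c * real M powr b"
  shows "entropy_bigO C (a / b)"
proof -
  define c' where "c' = c * (2 powr b * (2 * K) powr (b / a))"
  have "covering_number C eps \<noteq> \<infinity> \<and>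
      \<bar>log 2 (real (the_enat (covering_number C eps)))\<bar> \<le> c' * \<bar>eps powr (- 1 / (a / b))\<bar>"
    if eps: "0 < eps" "eps < 2 * K" for eps
  proof -
    obtain M :: nat where M: "M \<ge> 1" "K * real M powr (- a) \<le> eps / 2"
      "real M powr b \<le> 2 powr b * (2 * K) powr (b / a) * eps powr (- b / a)"
      using exists_scale_for_radius[OF \<open>K > 0\<close> \<open>a > 0\<close> \<open>b > 0\<close> eps(1) less_imp_le[OF eps(2)]] .
    obtain E where E: "finite E" "\<forall>x\<in>C. \<exists>e\<in>E. dist x e \<le> K * real M powr (- a)"
      "log 2 (real (card E)) \<le> c * real M powr b"
      using nets[OF \<open>M \<ge> 1\<close>] by blast
    have "\<forall>x\<in>C. \<exists>e\<in>E. dist x e \<le> eps / 2" using E(2) M(2) by force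
    from log_covering_number_le_external_net[OF \<open>C \<noteq> {}\<close> E(1) this]
    have "covering_number C eps \<noteq> \<infinity>"
      and "\<bar>log 2 (real (the_enat (covering_number C eps)))\<bar> \<le> log 2 (real (card E))" by simp_all
    moreover have "c * real M powr b \<le> c' * \<bar>eps powr (- 1 / (a / b))\<bar>"
      using mult_left_mono[OF M(3) \<open>c \<ge> 0\<close>] by (simp add: c'_def mult.assoc)
    ultimately show ?thesis using E(3) by linarith
  qed
  then have "\<forall>\<^sub>F eps in at_right 0. covering_number C eps \<noteq> \<infinity> \<and>
      \<bar>log 2 (real (the_enat (covering_number C eps)))\<bar> \<le> c' * \<bar>eps powr (- 1 / (a / b))\<bar>"
    unfolding eventually_at_right_field using \<open>K > 0\<close> by (intro exI[of _ "2 * K"]) auto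
  then show ?thesis unfolding entropy_bigO_def by blast
qed

lemma approx_class_nets:
  fixes \<Sigma> :: "nat \<Rightarrow> 'a::metric_space set" and \<alpha> \<beta> \<gamma> a h :: real
  assumes "\<And>M. M \<ge> 1 \<Longrightarrow> \<Sigma> M \<noteq> {}" "\<beta> \<ge> 0" "a \<le> \<alpha>" "a \<le> \<gamma>"
    and "has_encoding \<Sigma> \<gamma> h"
  obtains K c where "K > 0" "c \<ge> 0"
    "\<And>M. M \<ge> 1 \<Longrightarrow> \<exists>E. finite E \<and>
       (\<forall>x\<in>approx_class \<alpha> \<Sigma> \<beta>. \<exists>e\<in>E. dist x e \<le> K * real M powr (- a))
       \<and> log 2 (real (card E)) \<le> c * real M powr (1 + h)"
proof -
  obtain E :: "nat \<Rightarrow> 'a set" and c1 c2 where "c1 > 0" "c2 > 0" and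
    E: "\<And>M. M \<ge> 1 \<Longrightarrow> is_covering (E M) (\<Sigma> M) (c1 * real M powr (- \<gamma>))
                        \<and> log 2 (real (card (E M))) \<le> c2 * real M powr (1 + h)"
    using assms(5) unfolding has_encoding_def by blast
  have "\<exists>e\<in>E M. dist x e \<le> (\<beta> + c1) * real M powr (- a)"
    if "M \<ge> 1" "x \<in> approx_class \<alpha> \<Sigma> \<beta>" for M x
  proof -
    have M: "real M > 0" using \<open>M \<ge> 1\<close> by simp
    have "real M powr \<alpha> * infdist x (\<Sigma> M) \<le> \<beta>"
      using that unfolding approx_class_def by auto
    then have "infdist x (\<Sigma> M) \<le> \<beta> * real M powr (- \<alpha>)"
      using M by (simp add: powr_minus field_simps)
    moreover have cov: "is_covering (E M) (\<Sigma> M) (c1 * real M powr (- \<gamma>))"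
      using E \<open>M \<ge> 1\<close> by blast
    moreover have "infdist x (E M) \<le> infdist x (\<Sigma> M) + c1 * real M powr (- \<gamma>)"
      using cov assms(1)[OF \<open>M \<ge> 1\<close>] unfolding is_covering_def
      by (intro infdist_le_infdist_add) auto
    ultimately have "infdist x (E M) \<le> \<beta> * real M powr (- \<alpha>) + c1 * real M powr (- \<gamma>)"
      by linarith
    also have "\<dots> \<le> \<beta> * real M powr (- a) + c1 * real M powr (- a)"
      using \<open>M \<ge> 1\<close> assms \<open>c1 > 0\<close> by (intro add_mono mult_left_mono powr_mono) auto
    finally have "infdist x (E M) \<le> (\<beta> + c1) * real M powr (- a)"
      by (simp add: distrib_right)
    moreover have "finite (E M)" "E M \<noteq> {}"
      using cov assms(1)[OF \<open>M \<ge> 1\<close>] unfolding is_covering_def by auto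
    ultimately show ?thesis by (metis finite_infdist_attained)
  qed
  moreover have "finite (E M)" if "M \<ge> 1" for M
    using E[OF that] unfolding is_covering_def by blast
  ultimately show ?thesis
    using that[of "\<beta> + c1" c2] E \<open>c1 > 0\<close> \<open>c2 > 0\<close> \<open>\<beta> \<ge> 0\<close> by (meson add_nonneg_pos less_imp_le)
qed

lemma entropy_bigO_approx_class:
  fixes \<Sigma> :: "nat \<Rightarrow> 'a::metric_space set" and \<alpha> \<beta> \<gamma> a g :: real
  assumes "\<And>M. M \<ge> 1 \<Longrightarrow> \<Sigma> M \<noteq> {}" "approx_class \<alpha> \<Sigma> \<beta> \<noteq> {}" "\<beta> \<ge> 0"
    and "0 < g" "g < a" "a \<le> \<alpha>" "a \<le> \<gamma>" "gamma_encodable \<Sigma> \<gamma>"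
  shows "entropy_bigO (approx_class \<alpha> \<Sigma> \<beta>) g"
proof -
  have "has_encoding \<Sigma> \<gamma> (a / g - 1)"
    using assms(4,5,8) unfolding gamma_encodable_def by simp
  then obtain K c where "K > 0" "c \<ge> 0" and nets:
    "\<And>M. M \<ge> 1 \<Longrightarrow> \<exists>E. finite E \<and>
       (\<forall>x\<in>approx_class \<alpha> \<Sigma> \<beta>. \<exists>e\<in>E. dist x e \<le> K * real M powr (- a))
       \<and> log 2 (real (card E)) \<le> c * real M powr (1 + (a / g - 1))"
    using approx_class_nets[where \<Sigma> = \<Sigma> and \<beta> = \<beta>, OF assms(1,3,6,7)] by blast
  have "0 < a" "0 < 1 + (a / g - 1)" using assms(4,5) by simp_all
  from entropy_bigO_of_nets[OF assms(2) this \<open>K > 0\<close> \<open>c \<ge> 0\<close> nets]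
  have "entropy_bigO (approx_class \<alpha> \<Sigma> \<beta>) (a / (1 + (a / g - 1)))" .
  then show ?thesis using assms(4,5) by simp
qed

lemma encodable_real_exponent:
  assumes "encodable \<Sigma> \<gamma>" "\<gamma> > 0" "\<alpha> > 0"
  obtains \<gamma>' where "gamma_encodable \<Sigma> \<gamma>'" "min (ereal \<alpha>) \<gamma> = ereal (min \<alpha> \<gamma>')"
proof (cases "\<gamma> = \<infinity>")
  case True
  then show ?thesis using that[of \<alpha>] assms unfolding encodable_def by simp
next
  case False
  then show ?thesis using that[of "real_of_ereal \<gamma>"] assms unfolding encodable_def
    by (cases \<gamma>) auto
qed

lemma opt_entropy_exp_ge:
  fixes C :: "'a::metric_space set" and m :: ereal
  assumes "m > 0" and bigO: "\<And>g. 0 < g \<Longrightarrow> ereal g < m \<Longrightarrow> entropy_bigO C g"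
  shows "m \<le> opt_entropy_exp C"
proof -
  define S where "S = {g::real. g > 0 \<and> entropy_bigO C g}"
  have below_Sup: "w \<le> Sup (ereal ` S) \<and> S \<noteq> {}" if w: "0 < w" "w < m" for w
  proof -
    obtain g where "w = ereal g" using w by (cases w) auto
    then have "g \<in> S" using w bigO unfolding S_def by auto
    then show ?thesis using \<open>w = ereal g\<close> by (auto intro: Sup_upper)
  qed
  obtain w where "0 < w" "w < m" using dense[OF \<open>m > 0\<close>] by blast
  then have "opt_entropy_exp C = Sup (ereal ` S)"
    using below_Sup unfolding opt_entropy_exp_def S_def by auto
  moreover have "m \<le> Sup (ereal ` S)"
    using below_Sup by (intro dense_le_bounded[OF \<open>m > 0\<close>]) auto
  ultimately show ?thesis by simp
qed

theorem mainTheorem9: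
  fixes \<Sigma> :: "nat \<Rightarrow> 'a::metric_space set"
    and \<gamma> :: ereal and \<alpha> \<beta> :: real
  assumes "\<gamma> > 0"
    and "\<And>M. M \<ge> 1 \<Longrightarrow> \<Sigma> M \<noteq> {}"
    and "encodable \<Sigma> \<gamma>"
    and "\<alpha> > 0" and "\<beta> > 0"
    and "approx_class \<alpha> \<Sigma> \<beta> \<noteq> {}"
  shows "opt_entropy_exp (approx_class \<alpha> \<Sigma> \<beta>) \<ge> min (ereal \<alpha>) \<gamma>"
proof -
  obtain \<gamma>' where enc: "gamma_encodable \<Sigma> \<gamma>'" and min: "min (ereal \<alpha>) \<gamma> = ereal (min \<alpha> \<gamma>')"
    using encodable_real_exponent[OF assms(3,1,4)] .
  show ?thesis
  proof (rule opt_entropy_exp_ge)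
    show "min (ereal \<alpha>) \<gamma> > 0" using assms(1,4) by simp
    fix g assume "0 < g" "ereal g < min (ereal \<alpha>) \<gamma>"
    then show "entropy_bigO (approx_class \<alpha> \<Sigma> \<beta>) g"
      using assms(2,5,6) enc min by (intro entropy_bigO_approx_class[where a = "min \<alpha> \<gamma>'"]) auto
  qed
qed

end
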